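(* Fix a start pose $\mathbf{p}_0$ and a CSC path type with inputs satisfying $r_1=r_3$ (e.g. the constant-speed Dubins LSL path with $v_1=v_3$, $\omega_1=\omega_3>0$, or the Dubins RSR path with $v_1=v_3$, $\omega_1=\omega_3<0$). Then every pose $\mathbf{p}_f\in\mathbb{R}^2\times[0,2\pi)$ is reachable from $\mathbf{p}_0$ by that CSC path type.
   Context: A pose is $\mathbf{p}=(x,y,\theta)$, heading understood modulo $2\pi$. An input is $\mathbf{u}=(v,\omega)$ with $v>0$. The motion primitive $\mathrm{M}_{\mathbf{u},\tau}$ maps $(x,y,\theta)$ to: if $\omega\neq0$, $\big(x-\frac{v}{\omega}(\sin\theta-\sin(\theta+\omega\tau)),\ y+\frac{v}{\omega}(\cos\theta-\cos(\theta+\omega\tau)),\ \theta+\omega\tau\big)$; if $\omega=0$, $(x+v\tau\cos\theta,\ y+v\tau\sin\theta,\ \theta)$. A CSC path uses inputs $\mathbf{u}_1,\mathbf{u}_2,\mathbf{u}_3$ with $\omega_1\neq0$, $\omega_2=0$, $\omega_3\neq 0$; LSL means $\omega_1,\omega_3>0$ and RSR means $\omega_1,\omega_3<0$. For fixed inputs, $\mathbf{p}_f$ is reachable from $\mathbf{p}_0$ if there exist $\tau_1,\tau_2,\tau_3\ge0$, with $|\omega_i\tau_i|<2\pi$ for turning segments, such that $\mathrm{M}_{\mathbf{u}_3,\tau_3}(\mathrm{M}_{\mathbf{u}_2,\tau_2}(\mathrm{M}_{\mathbf{u}_1,\tau_1}(\mathbf{p}_0)))$ has position $(x_f,y_f)$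 and heading congruent to $\theta_f$ modulo $2\pi$. Notation: $r_i=v_i/\omega_i$. *)

theory Defs
  imports Complex_Main
begin

type_synonym pose = "real \<times> real \<times> real"   (* (x, y, theta) *)
type_synonym input = "real \<times> real"          (* (v, omega) *)

definition motion :: "input \<Rightarrow> real \<Rightarrow> pose \<Rightarrow> pose" where
  "motion u \<tau> p = (case u of (v, \<omega>) \<Rightarrow> case p of (x, y, \<theta>) \<Rightarrow>
     (if \<omega> \<noteq> 0 then
        (x - v / \<omega> * (sin \<theta> - sin (\<theta> + \<omega> * \<tau>)),
         y + v / \<omega> * (cos \<theta> - cos (\<theta> + \<omega> * \<tau>)),
         \<theta> + \<omega> * \<tau>)
      else (x + v * \<tau> * cos \<theta>, y + v * \<tau> * sin \<theta>, \<theta>)))"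

definition angle_cong :: "real \<Rightarrow> real \<Rightarrow> bool" where
  "angle_cong a b \<longleftrightarrow> (\<exists>k::int. a = b + 2 * pi * of_int k)"

definition csc_reachable :: "input \<Rightarrow> input \<Rightarrow> input \<Rightarrow> pose \<Rightarrow> pose \<Rightarrow> bool" where
  "csc_reachable u1 u2 u3 p0 pf \<longleftrightarrow>
     (\<exists>\<tau>1 \<tau>2 \<tau>3. \<tau>1 \<ge> 0 \<and> \<tau>2 \<ge> 0 \<and> \<tau>3 \<ge> 0 \<and>
        \<bar>snd u1 * \<tau>1\<bar> < 2 * pi \<and> \<bar>snd u3 * \<tau>3\<bar> < 2 * pi \<and>
        (let q = motion u3 \<tau>3 (motion u2 \<tau>2 (motion u1 \<tau>1 p0)) in
           fst q = fst pf \<and> fst (snd q) = fst (snd pf) \<and>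
           angle_cong (snd (snd q)) (snd (snd pf))))"

end

theory Submission
  imports Defs
begin

text \<open>While a vehicle turns with radius \<open>r = v/\<omega>\<close>, the centre of its turning circle
\<open>(x - r sin \<theta>, y + r cos \<theta>)\<close> stays fixed, and a straight segment of length \<open>L\<close> at heading
\<open>\<phi>\<close> translates this centre by \<open>L (cos \<phi>, sin \<phi>)\<close>. Since \<open>r\<^sub>1 = r\<^sub>3\<close>, the first and last
turns use circles of the same radius, so it suffices to turn towards the direction
from the initial circle centre to the final one, drive the distance between the two
centres, and finally turn until the target heading is reached.\<close>

definition turn_center :: "real \<Rightarrow> pose \<Rightarrow> real \<times> real" where
  "turn_center r p = (case p of (x, y, \<theta>) \<Rightarrow> (x - r * sin \<theta>, y + r * cos \<theta>))"

lemma heading_motion: "snd (snd (motion (v, \<omega>) \<tau> p)) = snd (snd p) + \<omega> * \<tau>"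
  by (cases p) (simp add: motion_def)

lemma turn_center_motion_turn:
  assumes "\<omega> \<noteq> 0"
  shows "turn_center (v / \<omega>) (motion (v, \<omega>) \<tau> p) = turn_center (v / \<omega>) p"
  using assms by (cases p) (simp add: motion_def turn_center_def algebra_simps)

lemma turn_center_motion_straight:
  "turn_center r (motion (v, 0) \<tau> p) =
     (fst (turn_center r p) + v * \<tau> * cos (snd (snd p)),
      snd (turn_center r p) + v * \<tau> * sin (snd (snd p)))"
  by (cases p) (simp add: motion_def turn_center_def)

lemma angle_cong_sin_cos:
  assumes "angle_cong a b"
  shows "sin a = sin b" and "cos a = cos b"
  using assms by (auto simp: angle_cong_def sin_add cos_add)

lemma position_eq_if_turn_center_eq:
  assumes "turn_center r p = turn_center r q" and "angle_cong (snd (snd p)) (snd (snd q))"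
  shows "fst p = fst q" and "fst (snd p) = fst (snd q)"
  using assms angle_cong_sin_cos[OF assms(2)]
  by (cases p, cases q, simp add: turn_center_def)+

lemma turn_time_exists:
  assumes "\<omega> \<noteq> 0"
  shows "\<exists>\<tau> \<ge> 0. \<bar>\<omega> * \<tau>\<bar> < 2 * pi \<and> angle_cong (\<theta> + \<omega> * \<tau>) \<phi>"
proof -
  define t where "t = (if \<omega> > 0 then \<phi> - \<theta> else \<theta> - \<phi>)"
  define k where "k = \<lfloor>t / (2 * pi)\<rfloor>"
  define a where "a = t - 2 * pi * of_int k"
  have "of_int k \<le> t / (2 * pi)" "t / (2 * pi) < of_int k + 1"
    unfolding k_def by linarith+
  then have "2 * pi * of_int k \<le> t" "t < 2 * pi * (of_int k + 1)"
    by (simp_all add: field_simps)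
  then have a: "0 \<le> a" "a < 2 * pi"
    unfolding a_def by (simp_all add: algebra_simps)
  show ?thesis
  proof (intro exI conjI)
    show "0 \<le> a / \<bar>\<omega>\<bar>" "\<bar>\<omega> * (a / \<bar>\<omega>\<bar>)\<bar> < 2 * pi"
      using a assms by (simp_all add: abs_mult)
    have "\<omega> * (a / \<bar>\<omega>\<bar>) = (if \<omega> > 0 then a else - a)"
      using assms by auto
    then show "angle_cong (\<theta> + \<omega> * (a / \<bar>\<omega>\<bar>)) \<phi>"
      unfolding angle_cong_def a_def t_def
      by (auto intro: exI[of _ "-k"] exI[of _ k])
  qed
qed

lemma polar_form_exists: "\<exists>L \<phi>. L \<ge> 0 \<and> (a::real) = L * cos \<phi> \<and> (b::real) = L * sin \<phi>"
proof -
  have "rcis (cmod (Complex a b)) (Arg (Complex a b)) = Complex a b"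
    by (rule rcis_cmod_Arg)
  then show ?thesis
    by (metis Re_rcis Im_rcis complex.sel norm_ge_zero)
qed

theorem mainTheorem6:
  fixes v1 \<omega>1 v2 v3 \<omega>3 :: real and p0 :: pose and xf yf \<theta>f :: real
  assumes "v1 > 0" and "v2 > 0" and "v3 > 0"
    and "\<omega>1 \<noteq> 0" and "\<omega>3 \<noteq> 0"
    and "(\<omega>1 > 0 \<and> \<omega>3 > 0) \<or> (\<omega>1 < 0 \<and> \<omega>3 < 0)"
    and "v1 / \<omega>1 = v3 / \<omega>3"
    and "0 \<le> \<theta>f" and "\<theta>f < 2 * pi"
  shows "csc_reachable (v1, \<omega>1) (v2, 0) (v3, \<omega>3) p0 (xf, yf, \<theta>f)"
proof -
  define r where "r = v1 / \<omega>1"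
  define c0 where "c0 = turn_center r p0"
  define cf where "cf = turn_center r (xf, yf, \<theta>f)"
  obtain L \<phi> where L: "L \<ge> 0" "fst cf - fst c0 = L * cos \<phi>" "snd cf - snd c0 = L * sin \<phi>"
    using polar_form_exists by blast
  obtain \<tau>1 where \<tau>1: "\<tau>1 \<ge> 0" "\<bar>\<omega>1 * \<tau>1\<bar> < 2 * pi" "angle_cong (snd (snd p0) + \<omega>1 * \<tau>1) \<phi>"
    using turn_time_exists[OF assms(4)] by blast
  define \<tau>2 where "\<tau>2 = L / v2"
  obtain \<tau>3 where \<tau>3: "\<tau>3 \<ge> 0" "\<bar>\<omega>3 * \<tau>3\<bar> < 2 * pi"
      "angle_cong (snd (snd p0) + \<omega>1 * \<tau>1 + \<omega>3 * \<tau>3) \<theta>f"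
    using turn_time_exists[OF assms(5)] by blast
  define p1 where "p1 = motion (v1, \<omega>1) \<tau>1 p0"
  define p2 where "p2 = motion (v2, 0) \<tau>2 p1"
  define q where "q = motion (v3, \<omega>3) \<tau>3 p2"
  have "turn_center r p1 = c0"
    unfolding p1_def c0_def r_def using turn_center_motion_turn[OF assms(4)] .
  then have "turn_center r p2 = cf"
    using L assms(2) angle_cong_sin_cos[OF \<tau>1(3)]
    by (simp add: p2_def p1_def \<tau>2_def turn_center_motion_straight heading_motion prod_eq_iff)
  then have "turn_center r q = cf"
    unfolding q_def r_def assms(7) using turn_center_motion_turn[OF assms(5)] by simp
  moreover have "angle_cong (snd (snd q)) \<theta>f"
    using \<tau>3(3) by (simp add: q_def p2_def p1_def heading_motion)
  ultimately have "fst q = xf" "fst (snd q) = yf"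
    using position_eq_if_turn_center_eq[of r q "(xf, yf, \<theta>f)"] by (simp_all add: cf_def)
  moreover have "\<tau>2 \<ge> 0"
    using L(1) assms(2) by (simp add: \<tau>2_def)
  ultimately show ?thesis
    unfolding csc_reachable_def Let_def
    using \<tau>1 \<tau>3 \<open>angle_cong (snd (snd q)) \<theta>f\<close>
    by (auto simp: q_def p2_def p1_def)
qed

end
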